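(* Let $N,n_{\mathrm{el}}\ge1$, $M\in\mathbb{R}^{3N\times3N}$ constant symmetric positive definite, $V_{\mathrm{ext}}:\mathbb{R}^{3N}\to\mathbb{R}$ continuously differentiable, $h>0$, and inputs $u^{n+1/2}\in\mathbb{R}^{3N}$. For $i=1,\dots,n_{\mathrm{el}}$ let $k_i>0$, $l_{0,i}>0$, $a_{ij}\in\mathbb{R}$, define $\tilde C_i(q)=\frac{\bar q_i\cdot\bar q_i}{l_{0,i}^2}$ with $\bar q_i=\sum_{j=1}^Na_{ij}q_j$ ($q=(q_1,\dots,q_N)$, $q_j\in\mathbb{R}^3$), $V_{\mathrm{int},i}(c)=\frac{k_il_{0,i}}{4}(c-\ln c-1)$. Let $\overline{\nabla}V_{\mathrm{ext}}(q,q')$ be the midpoint (Gonzalez) discrete gradient, $\overline{\nabla}V_{\mathrm{ext}}(q,q')=\nabla V_{\mathrm{ext}}(\tfrac{q+q'}2)+\frac{V_{\mathrm{ext}}(q')-V_{\mathrm{ext}}(q)-\nabla V_{\mathrm{ext}}(\frac{q+q'}2)\cdot(q'-q)}{|q'-q|^2}(q'-q)$ for $q'\ne q$ and $\nabla V_{\mathrm{ext}}(q)$ otherwise, and $\overline{\nabla}V_{\mathrm{int}}(C,C')$ the componentwise Greenspan discrete derivative $\frac{V_{\mathrm{int},i}(C_i')-V_{\mathrm{int},i}(C_i)}{C_i'-C_i}$ (or $V_{\mathrm{int},i}'(\frac{C_i+C_i'}2)$ if $C_i'=C_i$). Let $(q^n,v^n,C^n)_{n=0}^{n_{\mathrm t}}$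 (with positive strain components) satisfy for each $n=0,\dots,n_{\mathrm t}-1$, with $x^{n+1/2}=\frac12(x^n+x^{n+1})$, $$q^{n+1}-q^n=h\,v^{n+1/2},\quad M(v^{n+1}-v^n)=h\big(-\overline{\nabla}V_{\mathrm{ext}}(q^n,q^{n+1})-D\tilde C(q^{n+1/2})^{\mathrm T}\overline{\nabla}V_{\mathrm{int}}(C^n,C^{n+1})+u^{n+1/2}\big),\quad C^{n+1}-C^n=h\,D\tilde C(q^{n+1/2})v^{n+1/2}.$$ If $C^0=\tilde C(q^0)$, then $C^n=\tilde C(q^n)$ for all $n=1,\dots,n_{\mathrm t}$.
   Context: $D\tilde C(q)$ denotes the Jacobian of $\tilde C=(\tilde C_1,\dots,\tilde C_{n_{\mathrm{el}}})$. This is the midpoint discrete-gradient time discretization of a port-Hamiltonian model of a discrete nonlinear elastodynamical system in which the strains $C$ are an independent state subject to the kinematic relation $C=\tilde C(q)$. *)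

theory Defs
  imports "HOL-Analysis.Analysis"
begin

text \<open>Configuration space R^{3N} is modelled as real^('n \<times> 3): component (j,d) is the
  d-th coordinate of node q_j.  Strain space R^{n_el} is real^'e.\<close>

definition qbar :: "real^'n^'e \<Rightarrow> real^('n \<times> 3) \<Rightarrow> 'e \<Rightarrow> real^3" where
  "qbar a q i = (\<chi> d. \<Sum>j\<in>UNIV. a$i$j * q$(j,d))"

definition Ctilde :: "real^'n^'e \<Rightarrow> real^'e \<Rightarrow> real^('n \<times> 3) \<Rightarrow> real^'e" where
  "Ctilde a l0 q = (\<chi> i. (qbar a q i \<bullet> qbar a q i) / (l0$i)^2)"

definition jacobian :: "(real^'m \<Rightarrow> real^'k) \<Rightarrow> real^'m \<Rightarrow> real^'m^'k" where
  "jacobian f x = matrix (frechet_derivative f (at x))"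

definition Vint :: "real \<Rightarrow> real \<Rightarrow> real \<Rightarrow> real" where
  "Vint k l0 c = k * l0 / 4 * (c - ln c - 1)"

definition dgrad_ext :: "(real^'m \<Rightarrow> real) \<Rightarrow> (real^'m \<Rightarrow> real^'m) \<Rightarrow> real^'m \<Rightarrow> real^'m \<Rightarrow> real^'m" where
  "dgrad_ext V gV q q' =
     (if q' = q then gV q
      else gV ((q + q') /\<^sub>R 2)
           + ((V q' - V q - gV ((q + q') /\<^sub>R 2) \<bullet> (q' - q)) / (norm (q' - q))^2) *\<^sub>R (q' - q))"

definition dgrad_int :: "real^'e \<Rightarrow> real^'e \<Rightarrow> real^'e \<Rightarrow> real^'e \<Rightarrow> real^'e" where
  "dgrad_int k l0 C C' =
     (\<chi> i. if C'$i = C$i then deriv (Vint (k$i) (l0$i)) ((C$i + C'$i) / 2)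
           else (Vint (k$i) (l0$i) (C'$i) - Vint (k$i) (l0$i) (C$i)) / (C'$i - C$i))"

end

theory Submission
  imports Defs
begin

text \<open>Every strain \<open>Ctilde\<close> is a quadratic form in \<open>q\<close>, and for a quadratic function the
  midpoint rule is exact: \<open>f q' - f q = Df ((q + q')/2) (q' - q)\<close>.  Since \<open>q' - q = h v\<close>,
  each strain update adds exactly the increment of \<open>Ctilde\<close> along \<open>q\<close>, so the kinematic
  relation propagates from the initial step by telescoping.\<close>

lemma jacobian_mult_vector:
  fixes f :: "real^'m \<Rightarrow> real^'k"
  assumes "(f has_derivative f') (at x)"
  shows "jacobian f x *v y = f' y"
  using assms frechet_derivative_at[OF assms] has_derivative_bounded_linear
    matrix_vector_mul(3)
  unfolding jacobian_def by metis

lemma inner_self_diff_midpoint: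
  fixes x y :: "'a::real_inner"
  shows "y \<bullet> y - x \<bullet> x = 2 * (((x + y) /\<^sub>R 2) \<bullet> (y - x))"
  by (simp add: inner_diff_right inner_add_left inner_commute algebra_simps)

lemma eq_of_eq_increments:
  fixes C D :: "nat \<Rightarrow> 'a::ab_group_add"
  assumes increments: "\<forall>n<nt. C (Suc n) - C n = D (Suc n) - D n"
    and start: "C 0 = D 0"
  shows "\<forall>n\<le>nt. C n = D n"
proof (intro allI impI)
  fix n
  show "n \<le> nt \<Longrightarrow> C n = D n"
  proof (induction n)
    case 0
    show ?case using start .
  next
    case (Suc n)
    then have "C n = D n"
      by simp
    moreover have "C (Suc n) - C n = D (Suc n) - D n"
      using increments Suc.prems by simp
    ultimately show ?case
      by (metis diff_add_cancel)
  qed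
qed

lemma linear_qbar: "linear (\<lambda>q. qbar a q i)"
  by (rule linearI)
    (simp_all add: qbar_def vec_eq_iff sum.distrib sum_distrib_left algebra_simps)

lemma bounded_linear_qbar: "bounded_linear (\<lambda>q. qbar a q i)"
  using linear_qbar by (simp add: linear_conv_bounded_linear)

definition DCtilde :: "real^'n^'e \<Rightarrow> real^'e \<Rightarrow> real^('n \<times> 3) \<Rightarrow> real^('n \<times> 3) \<Rightarrow> real^'e"
  where "DCtilde a l0 x y = (\<chi> i. 2 * (qbar a x i \<bullet> qbar a y i) / (l0$i)^2)"

lemma has_derivative_Ctilde:
  fixes a :: "real^'n::finite^'e::finite"
  shows "(Ctilde a l0 has_derivative DCtilde a l0 x) (at x)"
proof (subst has_derivative_componentwise_within, intro ballI)
  fix b :: "real^'e"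
  assume "b \<in> Basis"
  then obtain i where b: "b = axis i 1"
    by (auto simp: Basis_vec_def)
  have "((\<lambda>q. (1 / (l0$i)^2) * (qbar a q i \<bullet> qbar a q i)) has_derivative
        (\<lambda>y. (1 / (l0$i)^2) * (qbar a x i \<bullet> qbar a y i + qbar a y i \<bullet> qbar a x i))) (at x)"
    by (intro has_derivative_mult_right has_derivative_inner
        bounded_linear.has_derivative[OF bounded_linear_qbar] has_derivative_ident)
  then show "((\<lambda>q. Ctilde a l0 q \<bullet> b) has_derivative (\<lambda>y. DCtilde a l0 x y \<bullet> b)) (at x)"
    by (simp add: b inner_axis' Ctilde_def DCtilde_def inner_commute)
qed

lemma Ctilde_diff_midpoint:
  "Ctilde a l0 q' - Ctilde a l0 q = DCtilde a l0 ((q + q') /\<^sub>R 2) (q' - q)"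
proof -
  have "qbar a q' i \<bullet> qbar a q' i - qbar a q i \<bullet> qbar a q i
        = 2 * (qbar a ((q + q') /\<^sub>R 2) i \<bullet> qbar a (q' - q) i)" for i
  proof -
    have "qbar a ((q + q') /\<^sub>R 2) i = (qbar a q i + qbar a q' i) /\<^sub>R 2"
      by (simp add: linear_add[OF linear_qbar] linear_scale[OF linear_qbar])
    moreover have "qbar a (q' - q) i = qbar a q' i - qbar a q i"
      by (rule linear_diff[OF linear_qbar])
    ultimately show ?thesis
      by (simp only: inner_self_diff_midpoint)
  qed
  then show ?thesis
    by (simp add: vec_eq_iff Ctilde_def DCtilde_def flip: diff_divide_distrib)
qed

lemma jacobian_Ctilde_midpoint:
  fixes a :: "real^'n::finite^'e::finite"
  shows "jacobian (Ctilde a l0) ((q + q') /\<^sub>R 2) *v (q' - q) = Ctilde a l0 q' - Ctilde a l0 q"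
  by (simp add: jacobian_mult_vector[OF has_derivative_Ctilde] Ctilde_diff_midpoint)

theorem mainTheorem5:
  fixes M :: "real^('n::finite \<times> 3)^('n \<times> 3)"
    and Vext :: "real^('n \<times> 3) \<Rightarrow> real"
    and gVext :: "real^('n \<times> 3) \<Rightarrow> real^('n \<times> 3)"
    and h :: real
    and u :: "nat \<Rightarrow> real^('n \<times> 3)"
    and k l0 :: "real^'e::finite"
    and a :: "real^'n^'e"
    and q v :: "nat \<Rightarrow> real^('n \<times> 3)"
    and C :: "nat \<Rightarrow> real^'e"
    and nt :: nat
  assumes M_sym: "transpose M = M"
    and M_pd: "\<forall>x. x \<noteq> 0 \<longrightarrow> x \<bullet> (M *v x) > 0"
    and V_grad: "\<forall>x. (Vext has_derivative (\<lambda>y. gVext x \<bullet> y)) (at x)"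
    and V_C1: "continuous_on UNIV gVext"
    and h_pos: "h > 0"
    and k_pos: "\<forall>i. k$i > 0"
    and l0_pos: "\<forall>i. l0$i > 0"
    and C_pos: "\<forall>n\<le>nt. \<forall>i. C n $ i > 0"
    and eq_q: "\<forall>n<nt. q (Suc n) - q n = h *\<^sub>R ((v n + v (Suc n)) /\<^sub>R 2)"
    and eq_v: "\<forall>n<nt. M *v (v (Suc n) - v n) =
        h *\<^sub>R (- dgrad_ext Vext gVext (q n) (q (Suc n))
               - transpose (jacobian (Ctilde a l0) ((q n + q (Suc n)) /\<^sub>R 2))
                   *v dgrad_int k l0 (C n) (C (Suc n))
               + u n)"
    and eq_C: "\<forall>n<nt. C (Suc n) - C n =
        h *\<^sub>R (jacobian (Ctilde a l0) ((q n + q (Suc n)) /\<^sub>R 2) *v ((v n + v (Suc n)) /\<^sub>R 2))"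
    and init: "C 0 = Ctilde a l0 (q 0)"
  shows "\<forall>n\<in>{1..nt}. C n = Ctilde a l0 (q n)"
proof -
  have "\<forall>n<nt. C (Suc n) - C n = Ctilde a l0 (q (Suc n)) - Ctilde a l0 (q n)"
  proof (intro allI impI)
    fix n
    assume "n < nt"
    let ?J = "jacobian (Ctilde a l0) ((q n + q (Suc n)) /\<^sub>R 2)"
    have "C (Suc n) - C n = ?J *v (h *\<^sub>R ((v n + v (Suc n)) /\<^sub>R 2))"
      using eq_C \<open>n < nt\<close> by (simp add: matrix_vector_mult_scaleR)
    also have "\<dots> = ?J *v (q (Suc n) - q n)"
      using eq_q \<open>n < nt\<close> by simp
    also have "\<dots> = Ctilde a l0 (q (Suc n)) - Ctilde a l0 (q n)"
      by (rule jacobian_Ctilde_midpoint)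
    finally show "C (Suc n) - C n = Ctilde a l0 (q (Suc n)) - Ctilde a l0 (q n)" .
  qed
  from eq_of_eq_increments[OF this init] show ?thesis
    by simp
qed

end
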